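(* For any positive contraction $p$ in an operator system $\mathcal V$ we have $\begin{pmatrix} p & p \\ p & p \end{pmatrix} + J_{p \oplus q} = \begin{pmatrix} p & 0 \\ 0 & 0 \end{pmatrix} + J_{p \oplus q}$ and $\begin{pmatrix} q & q \\ q & q \end{pmatrix} + J_{p \oplus q} = \begin{pmatrix} 0 & 0 \\ 0 & q \end{pmatrix} + J_{p \oplus q}$, where $q = e - p$. Consequently the map $\pi_p$ is unital.
   Context: Let $(\mathcal V, \{C_n\}_n, e)$ be an operator system and $0 \leq p \leq e$, $q = e-p$. Define $C(p \oplus q) = \{ x \in M_2(\mathcal V) : x = x^*, \ \forall \epsilon > 0 \ \exists t > 0 \text{ such that } x + \epsilon (p \oplus q) + t (q \oplus p) \in C_2\}$ and $J_{p \oplus q} = \operatorname{span}\big(C(p\oplus q) \cap -C(p \oplus q)\big)$. The map $\pi_p: \mathcal V \to M_2(\mathcal V)/J_{p\oplus q}$ is $\pi_p(x) = \begin{pmatrix} x & x \\ x & x \end{pmatrix} + J_{p \oplus q}$, and the unit of $M_2(\mathcal V)/J_{p\oplus q}$ is $(p \oplus q) + J_{p\oplus q}$. *)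

theory Defs
  imports Complex_Main
begin

text \<open>
  An n x n matrix over 'v is represented by a function
  nat => nat => 'v vanishing outside the index range {0..<n} x {0..<n}.
\<close>

type_synonym 'v mat = "nat \<Rightarrow> nat \<Rightarrow> 'v"

definition Mat :: "nat \<Rightarrow> 'v::zero mat set" where
  "Mat n = {x. \<forall>i j. (n \<le> i \<or> n \<le> j) \<longrightarrow> x i j = 0}"

definition madd :: "'v::plus mat \<Rightarrow> 'v mat \<Rightarrow> 'v mat" where
  "madd x y = (\<lambda>i j. x i j + y i j)"

definition msub :: "'v::minus mat \<Rightarrow> 'v mat \<Rightarrow> 'v mat" where
  "msub x y = (\<lambda>i j. x i j - y i j)"

definition mneg :: "'v::uminus mat \<Rightarrow> 'v mat" where
  "mneg x = (\<lambda>i j. - x i j)"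

definition msmul :: "(complex \<Rightarrow> 'v \<Rightarrow> 'v) \<Rightarrow> complex \<Rightarrow> 'v mat \<Rightarrow> 'v mat" where
  "msmul smul c x = (\<lambda>i j. smul c (x i j))"

definition madj :: "('v \<Rightarrow> 'v) \<Rightarrow> 'v mat \<Rightarrow> 'v mat" where
  "madj star x = (\<lambda>i j. star (x j i))"

definition mherm :: "('v \<Rightarrow> 'v) \<Rightarrow> 'v mat \<Rightarrow> bool" where
  "mherm star x \<longleftrightarrow> madj star x = x"

text \<open>a^* x a for a scalar m x n matrix a and x in M_m(V); result in M_n(V)\<close>
definition mconj :: "(complex \<Rightarrow> 'v::comm_monoid_add \<Rightarrow> 'v) \<Rightarrow> complex mat \<Rightarrow> nat \<Rightarrow> nat
    \<Rightarrow> 'v mat \<Rightarrow> 'v mat" where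
  "mconj smul a m n x = (\<lambda>i j. if i < n \<and> j < n
      then (\<Sum>k<m. \<Sum>l<m. smul (cnj (a k i) * a l j) (x k l)) else 0)"

definition mdiag :: "nat \<Rightarrow> 'v::zero \<Rightarrow> 'v mat" where
  "mdiag n v = (\<lambda>i j. if i = j \<and> i < n then v else 0)"

definition m1 :: "'v::zero \<Rightarrow> 'v mat" where
  "m1 v = (\<lambda>i j. if i = 0 \<and> j = 0 then v else 0)"

definition m2 :: "'v::zero \<Rightarrow> 'v \<Rightarrow> 'v \<Rightarrow> 'v \<Rightarrow> 'v mat" where
  "m2 a b c d = (\<lambda>i j. if i = 0 \<and> j = 0 then a else if i = 0 \<and> j = 1 then b
      else if i = 1 \<and> j = 0 then c else if i = 1 \<and> j = 1 then d else 0)"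

definition operator_system ::
  "(complex \<Rightarrow> 'v::ab_group_add \<Rightarrow> 'v) \<Rightarrow> ('v \<Rightarrow> 'v) \<Rightarrow> (nat \<Rightarrow> 'v mat set) \<Rightarrow> 'v \<Rightarrow> bool" where
  "operator_system smul star C e \<longleftrightarrow>
     Vector_Spaces.vector_space smul \<and>
     (\<forall>x y. star (x + y) = star x + star y) \<and>
     (\<forall>c x. star (smul c x) = smul (cnj c) (star x)) \<and>
     (\<forall>x. star (star x) = x) \<and>
     (\<forall>n. C n \<subseteq> {x \<in> Mat n. mherm star x}) \<and>
     (\<forall>n x y. x \<in> C n \<longrightarrow> y \<in> C n \<longrightarrow> madd x y \<in> C n) \<and>
     (\<forall>n (r::real) x. 0 \<le> r \<longrightarrow> x \<in> C n \<longrightarrow> msmul smul (complex_of_real r) x \<in> C n) \<and>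
     (\<forall>m n a x. x \<in> C m \<longrightarrow> mconj smul a m n x \<in> C n) \<and>
     (\<forall>n. C n \<inter> mneg ` C n = {\<lambda>i j. 0}) \<and>
     star e = e \<and>
     (\<forall>n x. x \<in> Mat n \<longrightarrow> mherm star x \<longrightarrow>
        (\<exists>r::real. r > 0 \<and> madd (msmul smul (complex_of_real r) (mdiag n e)) x \<in> C n)) \<and>
     (\<forall>n x. x \<in> Mat n \<longrightarrow> mherm star x \<longrightarrow>
        (\<forall>\<epsilon>::real. \<epsilon> > 0 \<longrightarrow> madd (msmul smul (complex_of_real \<epsilon>) (mdiag n e)) x \<in> C n)
        \<longrightarrow> x \<in> C n)"

text \<open>C(p \<oplus> q) for p \<oplus> q = m2 p 0 0 q\<close>
definition Cpq :: "(complex \<Rightarrow> 'v::ab_group_add \<Rightarrow> 'v) \<Rightarrow> ('v \<Rightarrow> 'v) \<Rightarrow> (nat \<Rightarrow> 'v mat set)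
    \<Rightarrow> 'v \<Rightarrow> 'v \<Rightarrow> 'v mat set" where
  "Cpq smul star C p q = {x \<in> Mat 2. mherm star x \<and>
     (\<forall>\<epsilon>::real. \<epsilon> > 0 \<longrightarrow> (\<exists>t::real. t > 0 \<and>
        madd (madd x (msmul smul (complex_of_real \<epsilon>) (m2 p 0 0 q)))
             (msmul smul (complex_of_real t) (m2 q 0 0 p)) \<in> C 2))}"

definition mspan :: "(complex \<Rightarrow> 'v::comm_monoid_add \<Rightarrow> 'v) \<Rightarrow> 'v mat set \<Rightarrow> 'v mat set" where
  "mspan smul S = {x. \<exists>(k::nat) (c::nat \<Rightarrow> complex) y. (\<forall>i<k. y i \<in> S) \<and>
      x = (\<lambda>a b. \<Sum>i<k. smul (c i) (y i a b))}"

definition Jpq :: "(complex \<Rightarrow> 'v::ab_group_add \<Rightarrow> 'v) \<Rightarrow> ('v \<Rightarrow> 'v) \<Rightarrow> (nat \<Rightarrow> 'v mat set)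
    \<Rightarrow> 'v \<Rightarrow> 'v \<Rightarrow> 'v mat set" where
  "Jpq smul star C p q = mspan smul (Cpq smul star C p q \<inter> mneg ` Cpq smul star C p q)"

definition coset :: "'v::plus mat \<Rightarrow> 'v mat set \<Rightarrow> 'v mat set" where
  "coset x J = {madd x y | y. y \<in> J}"

definition pi_p :: "(complex \<Rightarrow> 'v::ab_group_add \<Rightarrow> 'v) \<Rightarrow> ('v \<Rightarrow> 'v) \<Rightarrow> (nat \<Rightarrow> 'v mat set)
    \<Rightarrow> 'v \<Rightarrow> 'v \<Rightarrow> 'v \<Rightarrow> 'v mat set" where
  "pi_p smul star C e p x = coset (m2 x x x x) (Jpq smul star C p (e - p))"

end

theory Submission
  imports Defs
begin

text \<open>
  Since \<open>p + q = e\<close>, all three identities follow once the matrices \<open>(0, p; p, p)\<close> and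
  \<open>(q, q; q, 0)\<close> lie in \<open>J\<^sub>p\<^sub>\<oplus>\<^sub>q\<close>, i.e. once both they and their negatives lie in
  \<open>C(p \<oplus> q)\<close>. For \<open>x = (0, s p; s p, s p)\<close> with \<open>|s| \<le> 1\<close> and \<open>\<epsilon> > 0\<close>, the matrix
  \<open>x + \<epsilon> (p \<oplus> q) + t (q \<oplus> p)\<close> with \<open>t = 1 + 1/\<epsilon>\<close> is a sum of positive semidefinite
  scalar matrices tensored with the positive elements \<open>p\<close> and \<open>q\<close>, hence positive.
  The statement for \<open>(q, q; q, 0)\<close> follows by exchanging the two coordinates, which
  interchanges \<open>p \<oplus> q\<close> and \<open>q \<oplus> p\<close>.
\<close>

lemma m2_eq_iff: "m2 a b c d = m2 a' b' c' d' \<longleftrightarrow> a = a' \<and> b = b' \<and> c = c' \<and> d = d'"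
  unfolding m2_def by (auto simp: fun_eq_iff)

lemma m2_in_Mat: "m2 a b c d \<in> Mat 2"
  unfolding m2_def Mat_def by auto

lemma madd_m2: "madd (m2 a b c d) (m2 a' b' c' d') = m2 (a + a') (b + b') (c + c') (d + (d'::'v::monoid_add))"
  unfolding madd_def m2_def by (auto simp: fun_eq_iff)

lemma msub_m2: "msub (m2 a b c d) (m2 a' b' c' d') = m2 (a - a') (b - b') (c - c') (d - (d'::'v::group_add))"
  unfolding msub_def m2_def by (auto simp: fun_eq_iff)

lemma mneg_m2: "mneg (m2 a b c d) = m2 (- a) (- b) (- c) (- (d::'v::group_add))"
  unfolding mneg_def m2_def by (auto simp: fun_eq_iff)

lemma mherm_m2:
  assumes "star 0 = 0"
  shows "mherm star (m2 a b c d) \<longleftrightarrow> star a = a \<and> star c = b \<and> star b = c \<and> star d = d"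
proof -
  have "madj star (m2 a b c d) = m2 (star a) (star c) (star b) (star d)"
    unfolding madj_def m2_def using assms by (auto simp: fun_eq_iff)
  then show ?thesis unfolding mherm_def by (auto simp: m2_eq_iff)
qed

lemma msmul_m2:
  assumes "Vector_Spaces.vector_space smul"
  shows "msmul smul r (m2 a b c d) = m2 (smul r a) (smul r b) (smul r c) (smul r d)"
proof -
  interpret vector_space smul by (fact assms)
  show ?thesis unfolding msmul_def m2_def by (auto simp: fun_eq_iff)
qed

lemma mspanE:
  assumes "x \<in> mspan smul S"
  obtains k :: nat and c z where "\<forall>i<k. z i \<in> S" and "x = (\<lambda>a b. \<Sum>i<k. smul (c i) (z i a b))"
  using assms unfolding mspan_def by (elim CollectE exE conjE) (rule that; assumption)

lemma mspan_superset:
  assumes "Vector_Spaces.vector_space smul" and "x \<in> S"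
  shows "x \<in> mspan smul S"
proof -
  interpret vector_space smul by (fact assms(1))
  show ?thesis
    unfolding mspan_def using assms(2) by (intro CollectI exI[of _ 1] exI[of _ "\<lambda>_. 1"] exI[of _ "\<lambda>_. x"]) auto
qed

lemma mspan_madd:
  assumes "x \<in> mspan smul S" and "y \<in> mspan smul S"
  shows "madd x y \<in> mspan smul S"
proof -
  obtain k :: nat and c z where z: "\<forall>i<k. z i \<in> S" and x: "x = (\<lambda>a b. \<Sum>i<k. smul (c i) (z i a b))"
    using assms(1) by (rule mspanE)
  obtain k' :: nat and c' z' where z': "\<forall>i<k'. z' i \<in> S" and y: "y = (\<lambda>a b. \<Sum>i<k'. smul (c' i) (z' i a b))"
    using assms(2) by (rule mspanE)
  define c'' where "c'' = (\<lambda>i. if i < k then c i else c' (i - k))"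
  define z'' where "z'' = (\<lambda>i. if i < k then z i else z' (i - k))"
  have sum_split: "(\<Sum>i<k + n. f i) = (\<Sum>i<k. f i) + (\<Sum>i<n. f (k + i))"
    for n and f :: "nat \<Rightarrow> 'b::comm_monoid_add"
    by (induction n) (auto simp: add.assoc)
  have "madd x y = (\<lambda>a b. \<Sum>i<k + k'. smul (c'' i) (z'' i a b))"
    unfolding madd_def x y sum_split c''_def z''_def by simp
  moreover have "\<forall>i<k + k'. z'' i \<in> S" using z z' by (auto simp: z''_def)
  ultimately show ?thesis
    unfolding mspan_def by (intro CollectI exI[of _ "k + k'"] exI[of _ c''] exI[of _ z''] conjI)
qed

lemma mspan_mneg:
  assumes "Vector_Spaces.vector_space smul" and "x \<in> mspan smul S"
  shows "mneg x \<in> mspan smul S"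
proof -
  interpret vector_space smul by (fact assms(1))
  obtain k :: nat and c z where z: "\<forall>i<k. z i \<in> S" and x: "x = (\<lambda>a b. \<Sum>i<k. smul (c i) (z i a b))"
    using assms(2) by (rule mspanE)
  have "mneg x = (\<lambda>a b. \<Sum>i<k. smul (- c i) (z i a b))"
    unfolding mneg_def x by (simp add: sum_negf)
  then show ?thesis
    using z unfolding mspan_def by (intro CollectI exI[of _ k] exI[of _ "\<lambda>i. - c i"] exI[of _ z] conjI)
qed

lemma coset_eqI:
  fixes x y :: "'v::ab_group_add mat"
  assumes madd_closed: "\<And>a b. a \<in> J \<Longrightarrow> b \<in> J \<Longrightarrow> madd a b \<in> J"
    and mneg_closed: "\<And>a. a \<in> J \<Longrightarrow> mneg a \<in> J"
    and "msub x y \<in> J"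
  shows "coset x J = coset y J"
proof -
  have coset_subset: "coset a J \<subseteq> coset b J" if "msub a b \<in> J" for a b :: "'v mat"
  proof
    fix z assume "z \<in> coset a J"
    then obtain j where "j \<in> J" and z: "z = madd a j" unfolding coset_def by blast
    have "z = madd b (madd (msub a b) j)" unfolding z madd_def msub_def by simp
    then show "z \<in> coset b J" unfolding coset_def using madd_closed[OF that \<open>j \<in> J\<close>] by blast
  qed
  have "msub y x = mneg (msub x y)" unfolding msub_def mneg_def by simp
  then have "msub y x \<in> J" using mneg_closed[OF assms(3)] by simp
  then show ?thesis using coset_subset assms(3) by blast
qed

lemma Jpq_memI:
  assumes "Vector_Spaces.vector_space smul"
    and "x \<in> Cpq smul star C p q" and "mneg x \<in> Cpq smul star C p q"
  shows "x \<in> Jpq smul star C p q"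
proof -
  have "x = mneg (mneg x)" unfolding mneg_def by simp
  then have "x \<in> Cpq smul star C p q \<inter> mneg ` Cpq smul star C p q" using assms(2,3) by blast
  then show ?thesis unfolding Jpq_def by (rule mspan_superset[OF assms(1)])
qed

lemma Jpq_coset_eqI:
  assumes "Vector_Spaces.vector_space smul" and "msub x y \<in> Jpq smul star C p q"
  shows "coset x (Jpq smul star C p q) = coset y (Jpq smul star C p q)"
  using assms unfolding Jpq_def by (intro coset_eqI mspan_madd mspan_mneg)

context
  fixes smul :: "complex \<Rightarrow> 'v::ab_group_add \<Rightarrow> 'v" and star C e
  assumes os: "operator_system smul star C e"
begin

lemma os_vector_space: "Vector_Spaces.vector_space smul"
  using os unfolding operator_system_def by (elim conjE)

lemma os_madd_mem: "x \<in> C n \<Longrightarrow> y \<in> C n \<Longrightarrow> madd x y \<in> C n"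
  using os unfolding operator_system_def by (elim conjE) metis

lemma os_mconj_mem: "x \<in> C m \<Longrightarrow> mconj smul a m n x \<in> C n"
  using os unfolding operator_system_def by (elim conjE) metis

lemma os_star_zero: "star 0 = 0"
proof -
  have "star (0 + 0) = star 0 + star 0"
    using os unfolding operator_system_def by (elim conjE) metis
  then show ?thesis by simp
qed

lemma os_star_of_real_scale: "star (smul (of_real r) x) = smul (of_real r) (star x)"
proof -
  have "star (smul (of_real r) x) = smul (cnj (of_real r)) (star x)"
    using os unfolding operator_system_def by (elim conjE) metis
  then show ?thesis by simp
qed

lemma os_rank_one_mem:
  assumes "m1 u \<in> C 1"
  shows "m2 (smul (of_real (x * x)) u) (smul (of_real (x * y)) u)
            (smul (of_real (x * y)) u) (smul (of_real (y * y)) u) \<in> C 2"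
proof -
  interpret vector_space smul by (fact os_vector_space)
  define a :: "complex mat" where "a = (\<lambda>_ i. if i = 0 then of_real x else if i = 1 then of_real y else 0)"
  have "mconj smul a 1 2 (m1 u) = m2 (smul (of_real (x * x)) u) (smul (of_real (x * y)) u)
            (smul (of_real (x * y)) u) (smul (of_real (y * y)) u)"
    unfolding mconj_def m2_def m1_def a_def by (auto simp: fun_eq_iff less_2_cases_iff mult.commute)
  then show ?thesis using os_mconj_mem[OF assms] by metis
qed

text \<open>For \<open>\<alpha> > 0\<close> the scalar matrix \<open>(\<alpha>, \<beta>; \<beta>, \<delta>)\<close> is the sum of the rank-one matrices
  of the vectors \<open>(\<surd>\<alpha>, \<beta>/\<surd>\<alpha>)\<close> and \<open>(0, \<surd>(\<delta> - \<beta>\<^sup>2/\<alpha>))\<close>.\<close>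

lemma os_psd_scale_mem:
  assumes u: "m1 u \<in> C 1" and "0 \<le> \<alpha>" "0 \<le> \<delta>" "\<beta>\<^sup>2 \<le> \<alpha> * \<delta>"
  shows "m2 (smul (of_real \<alpha>) u) (smul (of_real \<beta>) u) (smul (of_real \<beta>) u) (smul (of_real \<delta>) u) \<in> C 2"
proof (cases "\<alpha> = 0")
  case True
  then have "\<beta> = 0" using assms(4) by simp
  then show ?thesis using os_rank_one_mem[OF u, of 0 "sqrt \<delta>"] True \<open>0 \<le> \<delta>\<close> by simp
next
  case False
  interpret vector_space smul by (fact os_vector_space)
  have "0 < \<alpha>" using False \<open>0 \<le> \<alpha>\<close> by simp
  define x y z where "x = sqrt \<alpha>" and "y = \<beta> / sqrt \<alpha>" and "z = sqrt (\<delta> - \<beta>\<^sup>2 / \<alpha>)"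
  have "\<beta>\<^sup>2 / \<alpha> \<le> \<delta>" using assms(4) \<open>0 < \<alpha>\<close> by (simp add: divide_le_eq mult.commute)
  then have xyz: "x * x = \<alpha>" "x * y = \<beta>" "y * y + z * z = \<delta>"
    using \<open>0 < \<alpha>\<close> by (simp_all add: x_def y_def z_def power2_eq_square)
  have "madd (m2 (smul (of_real (x * x)) u) (smul (of_real (x * y)) u)
            (smul (of_real (x * y)) u) (smul (of_real (y * y)) u))
          (m2 (smul (of_real (0 * 0)) u) (smul (of_real (0 * z)) u)
            (smul (of_real (0 * z)) u) (smul (of_real (z * z)) u)) \<in> C 2"
    by (intro os_madd_mem os_rank_one_mem u)
  then show ?thesis by (simp add: madd_m2 xyz flip: scale_left_distrib of_real_add of_real_mult)
qed

lemma os_m2_swap_mem: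
  assumes "m2 a b c d \<in> C 2"
  shows "m2 d c b a \<in> C 2"
proof -
  interpret vector_space smul by (fact os_vector_space)
  define w :: "complex mat" where "w = (\<lambda>k i. if k \<noteq> i then 1 else 0)"
  have "mconj smul w 2 2 (m2 a b c d) = m2 d c b a"
    unfolding mconj_def m2_def w_def by (auto simp: fun_eq_iff numeral_2_eq_2)
  then show ?thesis using os_mconj_mem[OF assms] by metis
qed

lemma os_positive_selfadjoint:
  assumes "m1 u \<in> C 1"
  shows "star u = u"
proof -
  have "mherm star (m1 u)"
    using os assms unfolding operator_system_def by (elim conjE) blast
  then have "madj star (m1 u) 0 0 = m1 u 0 0" unfolding mherm_def by simp
  then show ?thesis unfolding madj_def m1_def by simp
qed

lemma m2_mem_Cpq_iff:
  "m2 a b c d \<in> Cpq smul star C u v \<longleftrightarrow> mherm star (m2 a b c d) \<and>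
     (\<forall>\<epsilon>>0. \<exists>t>0. m2 (a + smul (of_real \<epsilon>) u + smul (of_real t) v) b c
                     (d + smul (of_real \<epsilon>) v + smul (of_real t) u) \<in> C 2)"
proof -
  interpret vector_space smul by (fact os_vector_space)
  show ?thesis
    unfolding Cpq_def by (simp add: m2_in_Mat madd_m2 msmul_m2[OF os_vector_space])
qed

lemma m2_swap_mem_Cpq:
  assumes "m2 a b c d \<in> Cpq smul star C u v"
  shows "m2 d c b a \<in> Cpq smul star C v u"
proof -
  have "mherm star (m2 d c b a)"
    using assms unfolding m2_mem_Cpq_iff mherm_m2[of star, OF os_star_zero] by blast
  moreover have "\<forall>\<epsilon>>0. \<exists>t>0. m2 (d + smul (of_real \<epsilon>) v + smul (of_real t) u) c b
                     (a + smul (of_real \<epsilon>) u + smul (of_real t) v) \<in> C 2"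
    using assms os_m2_swap_mem unfolding m2_mem_Cpq_iff by blast
  ultimately show ?thesis unfolding m2_mem_Cpq_iff by blast
qed

text \<open>With \<open>t = 1 + 1/\<epsilon>\<close> the matrix in the definition of \<open>C(u \<oplus> v)\<close> splits as
  \<open>u \<otimes> (\<epsilon>, s; s, s + t) + v \<otimes> (t, 0; 0, \<epsilon>)\<close>, and \<open>\<epsilon> (s + t) = \<epsilon> (s + 1) + 1 \<ge> s\<^sup>2\<close>.\<close>

lemma corner_mem_Cpq:
  assumes u: "m1 u \<in> C 1" and v: "m1 v \<in> C 1" and s: "\<bar>s\<bar> \<le> 1"
  shows "m2 0 (smul (of_real s) u) (smul (of_real s) u) (smul (of_real s) u) \<in> Cpq smul star C u v"
  unfolding m2_mem_Cpq_iff
proof (intro conjI allI impI)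
  interpret vector_space smul by (fact os_vector_space)
  show "mherm star (m2 0 (smul (of_real s) u) (smul (of_real s) u) (smul (of_real s) u))"
    by (simp add: mherm_m2 os_star_zero os_star_of_real_scale os_positive_selfadjoint[OF u])
  fix \<epsilon> :: real
  assume "\<epsilon> > 0"
  define t where "t = 1 + 1 / \<epsilon>"
  have "t > 1" using \<open>\<epsilon> > 0\<close> by (simp add: t_def)
  have "0 \<le> \<epsilon> * (s + 1)" using \<open>\<epsilon> > 0\<close> s by simp
  moreover have "\<epsilon> * (s + t) = \<epsilon> * (s + 1) + 1" using \<open>\<epsilon> > 0\<close> by (simp add: t_def field_simps)
  moreover have "s\<^sup>2 \<le> 1" using s by (simp add: abs_square_le_1)
  ultimately have "s\<^sup>2 \<le> \<epsilon> * (s + t)" by linarith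
  then have "m2 (smul (of_real \<epsilon>) u) (smul (of_real s) u) (smul (of_real s) u)
      (smul (of_real (s + t)) u) \<in> C 2"
    using \<open>\<epsilon> > 0\<close> \<open>t > 1\<close> s by (intro os_psd_scale_mem u) auto
  moreover have "m2 (smul (of_real t) v) (smul (of_real 0) v) (smul (of_real 0) v)
      (smul (of_real \<epsilon>) v) \<in> C 2"
    using \<open>\<epsilon> > 0\<close> \<open>t > 1\<close> by (intro os_psd_scale_mem v) auto
  ultimately have "madd (m2 (smul (of_real \<epsilon>) u) (smul (of_real s) u) (smul (of_real s) u)
      (smul (of_real (s + t)) u)) (m2 (smul (of_real t) v) (smul (of_real 0) v) (smul (of_real 0) v)
      (smul (of_real \<epsilon>) v)) \<in> C 2"
    by (rule os_madd_mem)
  then have "m2 (0 + smul (of_real \<epsilon>) u + smul (of_real t) v) (smul (of_real s) u) (smul (of_real s) u)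
      (smul (of_real s) u + smul (of_real \<epsilon>) v + smul (of_real t) u) \<in> C 2"
    by (simp add: madd_m2 scale_left_distrib ac_simps)
  then show "\<exists>t>0. m2 (0 + smul (of_real \<epsilon>) u + smul (of_real t) v) (smul (of_real s) u)
      (smul (of_real s) u) (smul (of_real s) u + smul (of_real \<epsilon>) v + smul (of_real t) u) \<in> C 2"
    using \<open>t > 1\<close> by (intro exI[of _ t]) simp
qed

end


theorem lemma5p6:
  fixes smul :: "complex \<Rightarrow> 'v::ab_group_add \<Rightarrow> 'v"
    and star :: "'v \<Rightarrow> 'v" and C :: "nat \<Rightarrow> 'v mat set" and e p q :: 'v
  assumes os: "operator_system smul star C e"
    and p_pos: "m1 p \<in> C 1" and p_le_e: "m1 (e - p) \<in> C 1"
    and q_def: "q = e - p"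
  shows "coset (m2 p p p p) (Jpq smul star C p q) = coset (m2 p 0 0 0) (Jpq smul star C p q)
       \<and> coset (m2 q q q q) (Jpq smul star C p q) = coset (m2 0 0 0 q) (Jpq smul star C p q)
       \<and> pi_p smul star C e p e = coset (m2 p 0 0 q) (Jpq smul star C p q)"
proof -
  have vs: "Vector_Spaces.vector_space smul" by (fact os_vector_space[OF os])
  interpret vector_space smul by (fact vs)
  have q_pos: "m1 q \<in> C 1" using p_le_e q_def by simp
  have corner_p: "m2 0 p p p \<in> Jpq smul star C p q"
    using corner_mem_Cpq[OF os p_pos q_pos, of 1] corner_mem_Cpq[OF os p_pos q_pos, of "-1"]
    by (intro Jpq_memI[OF vs]) (simp_all add: mneg_m2)
  have corner_q: "m2 q q q 0 \<in> Jpq smul star C p q"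
    using m2_swap_mem_Cpq[OF os corner_mem_Cpq[OF os q_pos p_pos, of 1]]
      m2_swap_mem_Cpq[OF os corner_mem_Cpq[OF os q_pos p_pos, of "-1"]]
    by (intro Jpq_memI[OF vs]) (simp_all add: mneg_m2)
  have "madd (m2 0 p p p) (m2 q q q 0) \<in> Jpq smul star C p q"
    using corner_p corner_q unfolding Jpq_def by (rule mspan_madd)
  moreover have "msub (m2 e e e e) (m2 p 0 0 q) = madd (m2 0 p p p) (m2 q q q 0)"
    by (simp add: msub_m2 madd_m2 q_def)
  ultimately show ?thesis
    using corner_p corner_q unfolding pi_p_def q_def[symmetric]
    by (intro conjI Jpq_coset_eqI[OF vs]) (simp_all add: msub_m2)
qed

end
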